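(* Let $n$ be a nonnegative integer. Suppose there exist a nonnegative integer $B$ and integers $x,y,z$ such that $3\mid n+B$ and $$\frac23(n+B)+B-5B^2=x^2+y^2+z^2+\frac{(x+y+z)^2}{2}\le B^2.$$ Then there exist nonnegative integers $x_0,y_0,z_0,w_0$ with $n=p_5(x_0)+p_5(y_0)+p_5(z_0)+2p_5(w_0)$.
   Context: For $k\in\mathbb{Z}$, $p_5(k)=k(3k-1)/2$. *)

theory Defs
  imports Complex_Main
begin

definition p5 :: "int \<Rightarrow> int" where
  "p5 k = k * (3 * k - 1) div 2"

end

theory Submission
  imports Defs
begin

text \<open>Put \<open>x\<^sub>0 = B + x\<close>, \<open>y\<^sub>0 = B + y\<close>, \<open>z\<^sub>0 = B + z\<close> and \<open>w\<^sub>0 = B - (x + y + z)/2\<close>.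
  Expanding \<open>p\<^sub>5\<close>, the terms linear in \<open>x, y, z\<close> cancel, and what remains is exactly three times
  the hypothesised quadratic identity, so \<open>n = p\<^sub>5(x\<^sub>0) + p\<^sub>5(y\<^sub>0) + p\<^sub>5(z\<^sub>0) + 2 p\<^sub>5(w\<^sub>0)\<close>.
  The identity forces \<open>x + y + z\<close> to be even, and the inequality bounds each of \<open>x\<^sup>2, y\<^sup>2, z\<^sup>2\<close>
  and \<open>((x + y + z)/2)\<^sup>2\<close> by \<open>B\<^sup>2\<close>, which makes all four arguments nonnegative.\<close>

lemma two_p5: "2 * p5 k = k * (3 * k - 1)"
proof -
  have "even (k * (3 * k - 1))" by auto
  then show ?thesis unfolding p5_def by simp
qed

lemma two_p5_shift_sum:
  fixes B x y z k :: int
  assumes "x + y + z = 2 * k"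
  shows "2 * (p5 (B + x) + p5 (B + y) + p5 (B + z) + 2 * p5 (B - k))
           = 15 * B\<^sup>2 - 5 * B + 3 * (x\<^sup>2 + y\<^sup>2 + z\<^sup>2) + 6 * k\<^sup>2"
proof -
  have "2 * (p5 (B + x) + p5 (B + y) + p5 (B + z) + 2 * p5 (B - k))
          = 15 * B\<^sup>2 - 5 * B + 3 * (x\<^sup>2 + y\<^sup>2 + z\<^sup>2) + 6 * k\<^sup>2
            + (6 * B - 1) * (x + y + z - 2 * k)"
    unfolding distrib_left two_p5 by (simp add: algebra_simps power2_eq_square)
  with assms show ?thesis by simp
qed

lemma abs_le_of_sum_squares_le:
  fixes x y z k B :: int
  assumes "2 * (x\<^sup>2 + y\<^sup>2 + z\<^sup>2) + (2 * k)\<^sup>2 \<le> 2 * B\<^sup>2" and "B \<ge> 0"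
  shows "\<bar>x\<bar> \<le> B" "\<bar>y\<bar> \<le> B" "\<bar>z\<bar> \<le> B" "\<bar>k\<bar> \<le> B"
proof -
  have "2 * (x\<^sup>2 + y\<^sup>2 + z\<^sup>2) + 4 * k\<^sup>2 \<le> 2 * B\<^sup>2"
    using assms(1) by (simp add: power_mult_distrib)
  moreover have "0 \<le> x\<^sup>2" "0 \<le> y\<^sup>2" "0 \<le> z\<^sup>2" "0 \<le> k\<^sup>2" by simp_all
  ultimately have "x\<^sup>2 \<le> B\<^sup>2" "y\<^sup>2 \<le> B\<^sup>2" "z\<^sup>2 \<le> B\<^sup>2" "k\<^sup>2 \<le> B\<^sup>2"
    by - (smt (verit))+
  then show "\<bar>x\<bar> \<le> B" "\<bar>y\<bar> \<le> B" "\<bar>z\<bar> \<le> B" "\<bar>k\<bar> \<le> B"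
    using assms(2) abs_le_square_iff[of _ B] by simp_all
qed

theorem lemma2p2:
  fixes n B x y z :: int
  assumes "n \<ge> 0" and "B \<ge> 0" and "3 dvd (n + B)"
    and "(2/3) * real_of_int (n + B) + real_of_int B - 5 * (real_of_int B)^2
          = real_of_int (x^2 + y^2 + z^2) + real_of_int ((x + y + z)^2) / 2"
    and "real_of_int (x^2 + y^2 + z^2) + real_of_int ((x + y + z)^2) / 2 \<le> (real_of_int B)^2"
  shows "\<exists>x0 y0 z0 w0 :: int. x0 \<ge> 0 \<and> y0 \<ge> 0 \<and> z0 \<ge> 0 \<and> w0 \<ge> 0 \<and>
           n = p5 x0 + p5 y0 + p5 z0 + 2 * p5 w0"
proof -
  have "real_of_int (4 * (n + B) + 6 * B - 30 * B\<^sup>2)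
          = real_of_int (6 * (x\<^sup>2 + y\<^sup>2 + z\<^sup>2) + 3 * (x + y + z)\<^sup>2)"
    using assms(4) by (simp add: field_simps)
  then have identity: "4 * (n + B) + 6 * B - 30 * B\<^sup>2 = 6 * (x\<^sup>2 + y\<^sup>2 + z\<^sup>2) + 3 * (x + y + z)\<^sup>2"
    by (simp only: of_int_eq_iff)
  have "real_of_int (2 * (x\<^sup>2 + y\<^sup>2 + z\<^sup>2) + (x + y + z)\<^sup>2) \<le> real_of_int (2 * B\<^sup>2)"
    using assms(5) by (simp add: field_simps)
  then have bound: "2 * (x\<^sup>2 + y\<^sup>2 + z\<^sup>2) + (x + y + z)\<^sup>2 \<le> 2 * B\<^sup>2"
    by (simp only: of_int_le_iff)
  have "3 * (x + y + z)\<^sup>2 = 2 * (2 * (n + B) + 3 * B - 15 * B\<^sup>2 - 3 * (x\<^sup>2 + y\<^sup>2 + z\<^sup>2))"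
    using identity by simp
  then have "even (x + y + z)"
    by (metis dvd_triv_left even_mult_iff even_numeral odd_numeral power2_eq_square)
  then obtain k where k: "x + y + z = 2 * k" by blast
  then have "\<bar>x\<bar> \<le> B" "\<bar>y\<bar> \<le> B" "\<bar>z\<bar> \<le> B" "\<bar>k\<bar> \<le> B"
    using abs_le_of_sum_squares_le[OF _ \<open>B \<ge> 0\<close>] bound by simp_all
  moreover have "n = p5 (B + x) + p5 (B + y) + p5 (B + z) + 2 * p5 (B - k)"
    using two_p5_shift_sum[OF k, of B] identity unfolding k by (simp add: power_mult_distrib)
  ultimately show ?thesis
    by (intro exI[of _ "B + x"] exI[of _ "B + y"] exI[of _ "B + z"] exI[of _ "B - k"]) auto
qed

end
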